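(* Let $P(q)=\sum_{j=0}^{n} q^{j}a_{j}$ be a slice regular polynomial of degree $n$ with all coefficients $a_j\in\mathbb H$. Assume that for some $I\in\mathbb S$, the restriction $P_I$ of $P$ to $\mathbb C_I$ has no zero in the open unit disk $\mathbb B_I=\{q\in\mathbb C_I:|q|<1\}$, and $P_I(\mathbb C_I)\subset\mathbb C_I$. Then $$\|P'\|\leq\frac{n}{2}\|P\|,$$ where $P'(q)=\sum_{j=1}^n q^{j-1}ja_j$ and $\|F\|=\max_{|q|\le1}|F(q)|$.
   Context: $\mathbb H$ denotes the quaternions with modulus $|q|=\sqrt{q\bar q}$; $\mathbb S=\{q\in\mathbb H:q^2=-1\}$; for $I\in\mathbb S$, $\mathbb C_I=\mathbb R\oplus I\mathbb R$ (a copy of $\mathbb C$). A slice regular polynomial of degree $n$ is a function $q\mapsto\sum_{j=0}^n q^ja_j$ with coefficients on the right and $a_n\neq0$. *)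

theory Defs
  imports "HOL-Analysis.Analysis"
begin

datatype quat = Quat (qRe: real) (qI: real) (qJ: real) (qK: real)

instantiation quat :: ring_1
begin
definition "0 = Quat 0 0 0 0"
definition "1 = Quat 1 0 0 0"
definition "x + y = Quat (qRe x + qRe y) (qI x + qI y) (qJ x + qJ y) (qK x + qK y)"
definition "x - y = Quat (qRe x - qRe y) (qI x - qI y) (qJ x - qJ y) (qK x - qK y)"
definition "- x = Quat (- qRe x) (- qI x) (- qJ x) (- qK x)"
definition "x * y = Quat
   (qRe x * qRe y - qI x * qI y - qJ x * qJ y - qK x * qK y)
   (qRe x * qI y + qI x * qRe y + qJ x * qK y - qK x * qJ y)
   (qRe x * qJ y - qI x * qK y + qJ x * qRe y + qK x * qI y)
   (qRe x * qK y + qI x * qJ y - qJ x * qI y + qK x * qRe y)"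
instance
  by standard (auto simp: zero_quat_def one_quat_def plus_quat_def minus_quat_def
      uminus_quat_def times_quat_def algebra_simps intro: quat.expand)
end

definition qreal :: "real \<Rightarrow> quat" where "qreal r = Quat r 0 0 0"

definition qnorm :: "quat \<Rightarrow> real" where
  "qnorm q = sqrt ((qRe q)\<^sup>2 + (qI q)\<^sup>2 + (qJ q)\<^sup>2 + (qK q)\<^sup>2)"

definition imag_units :: "quat set" where "imag_units = {q. q * q = - 1}"

definition slice :: "quat \<Rightarrow> quat set" where
  "slice I = {qreal x + qreal y * I | x y. True}"

definition spoly :: "nat \<Rightarrow> (nat \<Rightarrow> quat) \<Rightarrow> quat \<Rightarrow> quat" where
  "spoly n a q = (\<Sum>j=0..n. q ^ j * a j)"

definition spoly_deriv :: "nat \<Rightarrow> (nat \<Rightarrow> quat) \<Rightarrow> quat \<Rightarrow> quat" where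
  "spoly_deriv n a q = (\<Sum>j=1..n. q ^ (j - 1) * (of_nat j * a j))"

text \<open>Sup norm over the closed unit ball of H (a maximum for polynomials).\<close>
definition supnorm :: "(quat \<Rightarrow> quat) \<Rightarrow> real" where
  "supnorm F = (SUP q\<in>{q. qnorm q \<le> 1}. qnorm (F q))"

end

theory Submission
  imports Defs "HOL-Complex_Analysis.Complex_Analysis"
    "HOL-Computational_Algebra.Fundamental_Theorem_Algebra"
begin

text \<open>
  On the slice \<open>\<complex>\<^sub>I\<close> the polynomial \<open>P\<close> is a complex polynomial \<open>p\<close>: its coefficients lie in
  \<open>\<complex>\<^sub>I\<close> because \<open>P\<close> maps the real axis into \<open>\<complex>\<^sub>I\<close>. This \<open>p\<close> has no zeros in the open unit disc
  and is bounded by \<open>\<parallel>P\<parallel>\<close> on the closed one, so Lax's inequality gives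
  \<open>|p'| \<le> n/2 \<parallel>P\<parallel>\<close> there. On any other slice \<open>\<complex>\<^sub>J\<close>, the representation formula bounds
  \<open>|P'(x + yJ)|\<close> by the larger of \<open>|p'(x + iy)|\<close> and \<open>|p'(x - iy)|\<close>.
\<close>

section \<open>Lax's inequality\<close>

lemma Re_div_diff_ge_half:
  fixes z w :: complex
  assumes "cmod z = 1" and "cmod w \<le> 1" and "z \<noteq> w"
  shows "Re (z / (z - w)) \<ge> 1 / 2"
proof -
  obtain x y where z: "z = Complex x y" by (cases z)
  obtain u v where w: "w = Complex u v" by (cases w)
  have "x\<^sup>2 + y\<^sup>2 = 1" using assms(1) by (simp add: z cmod_def)
  moreover have "u\<^sup>2 + v\<^sup>2 \<le> 1" using assms(2) by (simp add: w cmod_def)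
  ultimately have le: "(x - u)\<^sup>2 + (y - v)\<^sup>2 \<le> 2 * (x * (x - u) + y * (y - v))"
    by (simp add: power2_eq_square algebra_simps)
  have "x - u \<noteq> 0 \<or> y - v \<noteq> 0" using assms(3) z w by auto
  then have pos: "(x - u)\<^sup>2 + (y - v)\<^sup>2 > 0" by (simp add: sum_power2_gt_zero_iff)
  have "Re (z / (z - w)) = (x * (x - u) + y * (y - v)) / ((x - u)\<^sup>2 + (y - v)\<^sup>2)"
    by (simp add: z w Re_divide power2_eq_square)
  also have "\<dots> \<ge> 1 / 2" using le pos by (simp add: le_divide_eq)
  finally show ?thesis .
qed

lemma Re_logderiv_ge_half_degree:
  fixes F :: "complex poly"
  assumes "F \<noteq> 0" and "\<And>w. poly F w = 0 \<Longrightarrow> cmod w \<le> 1"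
    and "cmod z = 1" and "poly F z \<noteq> 0"
  shows "Re (z * poly (pderiv F) z / poly F z) \<ge> degree F / 2"
  using assms
proof (induction "degree F" arbitrary: F)
  case 0
  then have "degree F = 0" and "pderiv F = 0" by (metis pderiv_eq_0_iff)+
  then show ?case by simp
next
  case (Suc k)
  then have "\<not> constant (poly F)" by (simp add: constant_degree)
  then obtain w where w: "poly F w = 0"
    using Fundamental_Theorem_Algebra.fundamental_theorem_of_algebra by blast
  then obtain G where G: "F = [:-w, 1:] * G" by (metis dvdE poly_eq_0_iff_dvd)
  have "G \<noteq> 0" using G Suc.prems by auto
  then have "degree F = Suc (degree G)"
    unfolding G by (subst degree_mult_eq) auto
  then have "degree G = k" using Suc.hyps(2) by simp
  moreover have zw: "z \<noteq> w" and Gz: "poly G z \<noteq> 0" using w Suc.prems G by auto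
  moreover have "poly G v = 0 \<Longrightarrow> cmod v \<le> 1" for v using Suc.prems(2) by (simp add: G)
  ultimately have IH: "Re (z * poly (pderiv G) z / poly G z) \<ge> k / 2"
    using Suc.hyps(1) \<open>G \<noteq> 0\<close> Suc.prems(3) by blast
  have F'z: "poly (pderiv F) z = (z - w) * poly (pderiv G) z + poly G z"
    unfolding G pderiv_mult by (simp add: pderiv_pCons algebra_simps)
  have Fz: "poly F z = (z - w) * poly G z" by (simp add: G algebra_simps)
  have "z * poly (pderiv F) z / poly F z = z * poly (pderiv G) z / poly G z + z / (z - w)"
    unfolding F'z Fz using zw Gz by (simp add: field_simps)
  moreover have "Re (z / (z - w)) \<ge> 1 / 2"
    using Re_div_diff_ge_half Suc.prems(2)[OF w] Suc.prems(3) zw by blast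
  ultimately show ?case using IH Suc.hyps(2) by simp
qed

lemma norm_of_real_diff_le:
  fixes W :: complex
  assumes "Re W \<ge> d / 2" and "d \<ge> 0"
  shows "cmod (of_real d - W) \<le> cmod W"
proof -
  obtain a b where W: "W = Complex a b" by (cases W)
  have "d * (d - 2 * a) \<le> 0" using assms W by (simp add: mult_nonneg_nonpos)
  then have "(d - a)\<^sup>2 + b\<^sup>2 \<le> a\<^sup>2 + b\<^sup>2" by (simp add: power2_eq_square algebra_simps)
  then show ?thesis using W by (simp add: cmod_def Complex_eq)
qed

lemma norm_degree_diff_logderiv_le:
  fixes F :: "complex poly"
  assumes "F \<noteq> 0" and "\<And>w. poly F w = 0 \<Longrightarrow> cmod w \<le> 1" and "cmod z = 1"
  shows "cmod (of_nat (degree F) * poly F z - z * poly (pderiv F) z) \<le> cmod (z * poly (pderiv F) z)"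
proof (cases "poly F z = 0")
  case False
  define W where "W = z * poly (pderiv F) z / poly F z"
  have "Re W \<ge> degree F / 2" using Re_logderiv_ge_half_degree[OF assms False] by (simp add: W_def)
  then have "cmod (of_real (degree F) - W) \<le> cmod W" by (rule norm_of_real_diff_le) simp
  moreover have "of_nat (degree F) * poly F z - z * poly (pderiv F) z = poly F z * (of_real (degree F) - W)"
    and "z * poly (pderiv F) z = poly F z * W"
    using False by (simp_all add: W_def field_simps)
  ultimately show ?thesis by (simp add: norm_mult mult_left_mono)
qed simp

lemma degree_pCons_0_pderiv:
  fixes p :: "'a::{field_char_0} poly"
  shows "degree (pCons 0 (pderiv p)) = degree p"
proof (cases "degree p = 0")
  case True
  then show ?thesis by (simp add: pderiv_eq_0_iff)
next
  case False
  then have "pderiv p \<noteq> 0" by (simp add: pderiv_eq_0_iff)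
  then show ?thesis using False by (simp add: degree_pderiv)
qed

lemma coeff_pCons_0_pderiv: "coeff (pCons 0 (pderiv p)) i = of_nat i * coeff p i"
  by (cases i) (simp_all add: coeff_pderiv)

text \<open>\<open>pCons 0 (pderiv p)\<close> is \<open>X p'\<close>: reflection turns the Euler operator \<open>X d/dX\<close> into
  \<open>n - X d/dX\<close>.\<close>

lemma reflect_poly_euler:
  fixes p :: "'a::{field_char_0} poly"
  shows "smult (of_nat (degree p)) (reflect_poly p) - pCons 0 (pderiv (reflect_poly p))
           = reflect_poly (pCons 0 (pderiv p))"
proof (rule poly_eqI)
  fix i
  define n where "n = degree p"
  have "coeff (reflect_poly (pCons 0 (pderiv p))) i
      = (if i > n then 0 else coeff (pCons 0 (pderiv p)) (n - i))"
    unfolding coeff_reflect_poly degree_pCons_0_pderiv n_def ..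
  also have "\<dots> = (if i > n then 0 else of_nat (n - i) * coeff p (n - i))"
    by (simp add: coeff_pCons_0_pderiv)
  also have "\<dots> = of_nat n * coeff (reflect_poly p) i - of_nat i * coeff (reflect_poly p) i"
    by (simp add: coeff_reflect_poly n_def of_nat_diff algebra_simps)
  also have "\<dots> = coeff (smult (of_nat n) (reflect_poly p) - pCons 0 (pderiv (reflect_poly p))) i"
    by (simp add: coeff_pCons_0_pderiv)
  finally show "coeff (smult (of_nat (degree p)) (reflect_poly p) - pCons 0 (pderiv (reflect_poly p))) i
      = coeff (reflect_poly (pCons 0 (pderiv p))) i" by (simp add: n_def)
qed

lemma pderiv_map_poly_cnj: "pderiv (map_poly cnj p) = map_poly cnj (pderiv p)"
  by (rule poly_eqI) (simp add: coeff_pderiv coeff_map_poly)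

definition conj_reflect :: "complex poly \<Rightarrow> complex poly" where
  "conj_reflect p = reflect_poly (map_poly cnj p)"

lemma degree_map_poly_cnj [simp]: "degree (map_poly cnj p) = degree p"
  by (rule degree_map_poly) simp

lemma coeff_conj_reflect:
  "coeff (conj_reflect p) i = (if i > degree p then 0 else cnj (coeff p (degree p - i)))"
  by (simp add: conj_reflect_def coeff_reflect_poly coeff_map_poly)

lemma degree_conj_reflect: "coeff p 0 \<noteq> 0 \<Longrightarrow> degree (conj_reflect p) = degree p"
  by (simp add: conj_reflect_def coeff_map_poly)

lemma poly_conj_reflect:
  "w \<noteq> 0 \<Longrightarrow> poly (conj_reflect p) w = w ^ degree p * cnj (poly p (inverse (cnj w)))"
  by (simp add: conj_reflect_def poly_reflect_poly_nz complex_cnj_inverse)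

lemma poly_conj_reflect_euler:
  assumes "w \<noteq> 0"
  shows "of_nat (degree p) * poly (conj_reflect p) w - w * poly (pderiv (conj_reflect p)) w
           = w ^ degree p * cnj (inverse (cnj w) * poly (pderiv p) (inverse (cnj w)))"
proof -
  have "of_nat (degree p) * poly (conj_reflect p) w - w * poly (pderiv (conj_reflect p)) w
      = poly (reflect_poly (pCons 0 (pderiv (map_poly cnj p)))) w"
    using arg_cong[OF reflect_poly_euler[of "map_poly cnj p"], of "\<lambda>f. poly f w"]
    by (simp add: conj_reflect_def)
  also have "\<dots> = w ^ degree p * poly (pCons 0 (pderiv (map_poly cnj p))) (inverse w)"
    by (simp only: poly_reflect_poly_nz[OF assms] degree_pCons_0_pderiv degree_map_poly_cnj)
  also have "\<dots> = w ^ degree p * cnj (inverse (cnj w) * poly (pderiv p) (inverse (cnj w)))"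
    by (simp add: pderiv_map_poly_cnj complex_cnj_inverse)
  finally show ?thesis .
qed

lemma le_diff_norm_if_le_dist_outside_ball:
  fixes Q :: complex
  assumes "R > 0" and "\<And>w. R < cmod w \<Longrightarrow> Q \<noteq> w \<and> x \<le> cmod (Q - w)"
  shows "x \<le> R - cmod Q"
proof -
  have Q_le: "cmod Q \<le> R" using assms(2)[of Q] by fastforce
  obtain u where u: "cmod u = 1" "Q = of_real (cmod Q) * u"
  proof (cases "Q = 0")
    case True
    then show ?thesis using that[of 1] by simp
  next
    case False
    then show ?thesis using that[of "Q / of_real (cmod Q)"] by (simp add: norm_divide)
  qed
  show ?thesis
  proof (rule field_le_epsilon)
    fix e :: real
    assume "e > 0"
    define w where "w = of_real (R + e) * u"
    have "cmod w = R + e"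
      using \<open>e > 0\<close> \<open>R > 0\<close> by (simp only: w_def norm_mult norm_of_real u(1)) simp
    have "cmod (Q - w) = cmod (of_real (cmod Q - (R + e)) * u)"
      by (subst (1) u(2)) (simp add: w_def algebra_simps)
    also have "\<dots> = \<bar>cmod Q - (R + e)\<bar>" by (simp only: norm_mult u(1) norm_of_real mult_1_right)
    also have "\<dots> = R + e - cmod Q" using Q_le \<open>e > 0\<close> by simp
    finally show "x \<le> R - cmod Q + e"
      using assms(2)[of w] \<open>cmod w = R + e\<close> \<open>e > 0\<close> by simp
  qed
qed

locale zero_free_in_disc =
  fixes p :: "complex poly" and M :: real
  assumes no_zero_in_ball: "\<And>w. cmod w < 1 \<Longrightarrow> poly p w \<noteq> 0"
    and bounded_on_cball: "\<And>w. cmod w \<le> 1 \<Longrightarrow> cmod (poly p w) \<le> M"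
begin

lemma coeff_0_nonzero: "coeff p 0 \<noteq> 0"
  using no_zero_in_ball[of 0] by (simp add: poly_0_coeff_0)

lemma norm_coeff_0_le: "cmod (coeff p 0) \<le> M"
  using bounded_on_cball[of 0] by (simp add: poly_0_coeff_0)

lemma bound_pos: "M > 0"
  using coeff_0_nonzero norm_coeff_0_le by (meson less_le_trans zero_less_norm_iff)

lemma norm_poly_at_reflection_le:
  assumes "cmod w \<ge> 1"
  shows "cmod (poly p (inverse (cnj w))) \<le> M"
  using assms by (intro bounded_on_cball) (simp add: norm_inverse inverse_le_1_iff)

lemma conj_reflect_diff_monom_root:
  assumes "M < cmod c" and "poly (conj_reflect p - monom c (degree p)) w = 0"
  shows "cmod w < 1"
proof (rule ccontr)
  assume "\<not> cmod w < 1"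
  then have w: "cmod w \<ge> 1" and "w \<noteq> 0" by auto
  then have "w ^ degree p * cnj (poly p (inverse (cnj w))) = w ^ degree p * c"
    using assms(2) by (simp add: poly_monom poly_conj_reflect mult.commute)
  then have "cnj (poly p (inverse (cnj w))) = c" using \<open>w \<noteq> 0\<close> by simp
  then have "cmod c \<le> M" using norm_poly_at_reflection_le[OF w] by (metis complex_mod_cnj)
  then show False using assms(1) by simp
qed

lemma conj_reflect_root:
  assumes "poly (conj_reflect p) w = 0"
  shows "cmod w \<le> 1"
proof (rule ccontr)
  assume "\<not> cmod w \<le> 1"
  then have "w \<noteq> 0" and "cmod (inverse (cnj w)) < 1"
    by (auto simp: norm_inverse inverse_less_1_iff)
  then show False using assms no_zero_in_ball by (simp add: poly_conj_reflect)
qed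

lemma norm_pderiv_eq_reflected:
  assumes "cmod z = 1"
  shows "cmod (poly (pderiv p) z)
           = cmod (of_nat (degree p) * poly (conj_reflect p) z - z * poly (pderiv (conj_reflect p)) z)"
proof -
  have "z \<noteq> 0" using assms by auto
  moreover have "inverse (cnj z) = z"
    using complex_norm_square[of z] assms by (intro inverse_unique) (simp add: mult.commute)
  ultimately show ?thesis using assms by (simp add: poly_conj_reflect_euler norm_mult norm_power)
qed

lemma norm_pderiv_le_perturbed:
  assumes "degree p \<ge> 1" and "cmod z = 1" and "M < cmod c"
  shows "z * poly (pderiv (conj_reflect p)) z \<noteq> c * of_nat (degree p) * z ^ degree p"
    and "cmod (poly (pderiv p) z)
           \<le> cmod (z * poly (pderiv (conj_reflect p)) z - c * of_nat (degree p) * z ^ degree p)"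
proof -
  define n where "n = degree p"
  define F where "F = conj_reflect p - monom c n"
  have "cmod (cnj (coeff p 0)) < cmod c" using assms(3) norm_coeff_0_le by simp
  then have "coeff F n \<noteq> 0" by (auto simp: F_def coeff_conj_reflect n_def)
  then have F0: "F \<noteq> 0" by auto
  have deg: "degree F = n"
  proof (rule antisym)
    show "degree F \<le> n" by (rule degree_le) (simp add: F_def coeff_conj_reflect coeff_monom n_def)
    show "n \<le> degree F" by (rule le_degree) fact
  qed
  have roots: "cmod w < 1" if "poly F w = 0" for w
    using conj_reflect_diff_monom_root[OF assms(3)] that by (simp add: F_def n_def)
  then have roots_cball: "\<And>w. poly F w = 0 \<Longrightarrow> cmod w \<le> 1" by fastforce
  have Fz: "poly F z \<noteq> 0" using roots assms(2) by force
  have "z * z ^ (n - 1) = z ^ n" using assms(1) by (simp add: n_def flip: power_Suc)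
  then have zF': "z * poly (pderiv F) z = z * poly (pderiv (conj_reflect p)) z - c * of_nat n * z ^ n"
    by (simp add: F_def pderiv_diff pderiv_monom poly_monom algebra_simps)
  have "Re (z * poly (pderiv F) z / poly F z) \<ge> n / 2"
    using Re_logderiv_ge_half_degree[OF F0 roots_cball assms(2) Fz] by (simp add: deg)
  then have "z * poly (pderiv F) z \<noteq> 0" using assms(1) by (auto simp: n_def)
  then show "z * poly (pderiv (conj_reflect p)) z \<noteq> c * of_nat (degree p) * z ^ degree p"
    by (simp add: zF' n_def)
  have "of_nat n * poly F z - z * poly (pderiv F) z
      = of_nat n * poly (conj_reflect p) z - z * poly (pderiv (conj_reflect p)) z"
    by (simp add: zF') (simp add: F_def poly_monom algebra_simps)
  then have "cmod (poly (pderiv p) z) = cmod (of_nat n * poly F z - z * poly (pderiv F) z)"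
    by (simp add: norm_pderiv_eq_reflected[OF assms(2)] n_def)
  also have "\<dots> \<le> cmod (z * poly (pderiv F) z)"
    using norm_degree_diff_logderiv_le[OF F0 roots_cball assms(2)] by (simp add: deg)
  finally show "cmod (poly (pderiv p) z)
      \<le> cmod (z * poly (pderiv (conj_reflect p)) z - c * of_nat (degree p) * z ^ degree p)"
    by (simp add: zF' n_def)
qed

text \<open>With \<open>q = conj_reflect p\<close>: \<open>|p'| \<le> |q'|\<close> on the circle, and the perturbations
  \<open>q - c z\<^sup>n\<close> with \<open>|c| > M\<close>, whose zeros lie in the open disc, give \<open>|p'| \<le> n M - |q'|\<close>.\<close>

lemma norm_pderiv_on_circle_le:
  assumes "degree p \<ge> 1" and "cmod z = 1"
  shows "cmod (poly (pderiv p) z) \<le> degree p / 2 * M"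
proof -
  define n where "n = degree p"
  define Q where "Q = z * poly (pderiv (conj_reflect p)) z"
  have "degree (conj_reflect p) = n" by (simp add: degree_conj_reflect[OF coeff_0_nonzero] n_def)
  then have "conj_reflect p \<noteq> 0" using assms(1) by (auto simp: n_def)
  then have "cmod (poly (pderiv p) z) \<le> cmod Q"
    using norm_degree_diff_logderiv_le[of "conj_reflect p", OF _ conj_reflect_root assms(2)]
      norm_pderiv_eq_reflected[OF assms(2)] \<open>degree (conj_reflect p) = n\<close>
    by (simp add: Q_def n_def)
  moreover have "cmod (poly (pderiv p) z) \<le> n * M - cmod Q"
  proof (rule le_diff_norm_if_le_dist_outside_ball)
    show "n * M > 0" using assms(1) bound_pos by (simp add: n_def)
    fix w
    assume w: "n * M < cmod w"
    define c where "c = w / (of_nat n * z ^ n)"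
    have "z \<noteq> 0" "n \<noteq> 0" using assms by (auto simp: n_def)
    then have "c * of_nat n * z ^ n = w" by (simp add: c_def)
    moreover have "M < cmod c"
      using w \<open>n \<noteq> 0\<close> assms(2) by (simp add: c_def norm_divide norm_mult norm_power field_simps)
    ultimately show "Q \<noteq> w \<and> cmod (poly (pderiv p) z) \<le> cmod (Q - w)"
      using norm_pderiv_le_perturbed[OF assms] by (auto simp: Q_def n_def)
  qed
  ultimately show ?thesis by (simp add: n_def)
qed

theorem norm_pderiv_le_half_degree:
  assumes "cmod z \<le> 1"
  shows "cmod (poly (pderiv p) z) \<le> degree p / 2 * M"
proof (cases "degree p = 0")
  case True
  then show ?thesis by (simp add: iffD2[OF pderiv_eq_0_iff])
next
  case False
  show ?thesis
  proof (rule maximum_modulus_frontier[where f = "poly (pderiv p)" and S = "cball 0 1"])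
    show "poly (pderiv p) holomorphic_on interior (cball 0 1)"
      by (simp add: poly_holomorphic_on holomorphic_on_ident)
    show "continuous_on (closure (cball 0 1)) (poly (pderiv p))"
      by (simp add: continuous_on_poly continuous_on_id)
    show "cmod (poly (pderiv p) w) \<le> degree p / 2 * M" if "w \<in> frontier (cball 0 1)" for w
      using that False norm_pderiv_on_circle_le by simp
  qed (use assms in auto)
qed

end

section \<open>Quaternion slices\<close>

lemma quat_eqI:
  "qRe x = qRe y \<Longrightarrow> qI x = qI y \<Longrightarrow> qJ x = qJ y \<Longrightarrow> qK x = qK y \<Longrightarrow> x = y"
  by (cases x, cases y) simp

lemma quat_components [simp]:
  "qRe (x * y) = qRe x * qRe y - qI x * qI y - qJ x * qJ y - qK x * qK y"
  "qI (x * y) = qRe x * qI y + qI x * qRe y + qJ x * qK y - qK x * qJ y"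
  "qJ (x * y) = qRe x * qJ y - qI x * qK y + qJ x * qRe y + qK x * qI y"
  "qK (x * y) = qRe x * qK y + qI x * qJ y - qJ x * qI y + qK x * qRe y"
  "qRe (x + y) = qRe x + qRe y" "qI (x + y) = qI x + qI y"
  "qJ (x + y) = qJ x + qJ y" "qK (x + y) = qK x + qK y"
  "qRe (x - y) = qRe x - qRe y" "qI (x - y) = qI x - qI y"
  "qJ (x - y) = qJ x - qJ y" "qK (x - y) = qK x - qK y"
  "qRe (- x) = - qRe x" "qI (- x) = - qI x" "qJ (- x) = - qJ x" "qK (- x) = - qK x"
  "qRe 0 = 0" "qI 0 = 0" "qJ 0 = 0" "qK 0 = 0"
  "qRe 1 = 1" "qI 1 = 0" "qJ 1 = 0" "qK 1 = 0"
  by (simp_all add: times_quat_def plus_quat_def minus_quat_def uminus_quat_def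
      zero_quat_def one_quat_def)

lemma quat_components_sum:
  "qRe (sum f S) = (\<Sum>x\<in>S. qRe (f x))" "qI (sum f S) = (\<Sum>x\<in>S. qI (f x))"
  "qJ (sum f S) = (\<Sum>x\<in>S. qJ (f x))" "qK (sum f S) = (\<Sum>x\<in>S. qK (f x))"
  by (induct S rule: infinite_finite_induct, simp_all)+

lemma quat_components_of_nat [simp]:
  "qRe (of_nat n) = real n" "qI (of_nat n) = 0" "qJ (of_nat n) = 0" "qK (of_nat n) = 0"
  by (induct n, simp_all)+

lemma qreal_components [simp]:
  "qRe (qreal t) = t" "qI (qreal t) = 0" "qJ (qreal t) = 0" "qK (qreal t) = 0"
  by (simp_all add: qreal_def)

lemma qreal_power: "qreal t ^ j = qreal (t ^ j)"
  by (induct j) (simp_all add: quat_eqI)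

lemma qreal_commute: "qreal t * x = x * qreal t"
  by (rule quat_eqI) simp_all

lemma qreal_in_slice: "qreal t \<in> slice I"
  unfolding slice_def by (rule CollectI, rule exI[of _ t], rule exI[of _ 0]) (simp add: quat_eqI)

lemma slice_commute: "w \<in> slice I \<Longrightarrow> w * I = I * w"
  by (auto simp: slice_def distrib_left distrib_right qreal_commute mult.assoc)

definition unit_imaginary :: "quat \<Rightarrow> bool" where
  "unit_imaginary J \<longleftrightarrow> qRe J = 0 \<and> (qI J)\<^sup>2 + (qJ J)\<^sup>2 + (qK J)\<^sup>2 = 1"

lemma imag_units_unit_imaginary:
  assumes "I \<in> imag_units"
  shows "unit_imaginary I"
proof -
  have I: "I * I = - 1" using assms by (simp add: imag_units_def)
  have sq: "(qRe I)\<^sup>2 - (qI I)\<^sup>2 - (qJ I)\<^sup>2 - (qK I)\<^sup>2 = -1"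
    using arg_cong[OF I, of qRe] by (simp add: power2_eq_square)
  have "qRe I = 0 \<or> qI I = 0 \<and> qJ I = 0 \<and> qK I = 0"
    using arg_cong[OF I, of qI] arg_cong[OF I, of qJ] arg_cong[OF I, of qK] by auto
  moreover have "(qRe I)\<^sup>2 \<noteq> -1" by (metis neg_0_le_iff_le not_one_le_zero zero_le_power2)
  ultimately have "qRe I = 0" using sq by auto
  then show ?thesis using sq by (simp add: unit_imaginary_def)
qed

text \<open>The embedding \<open>x + iy \<mapsto> x + yJ\<close> of \<open>\<complex>\<close> onto \<open>\<complex>\<^sub>J\<close>, written componentwise.\<close>

definition slice_embed :: "quat \<Rightarrow> complex \<Rightarrow> quat" where
  "slice_embed J z = Quat (Re z) (Im z * qI J) (Im z * qJ J) (Im z * qK J)"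

lemma slice_embed_components [simp]:
  "qRe (slice_embed J z) = Re z" "qI (slice_embed J z) = Im z * qI J"
  "qJ (slice_embed J z) = Im z * qJ J" "qK (slice_embed J z) = Im z * qK J"
  by (simp_all add: slice_embed_def)

lemma slice_embed_0 [simp]: "slice_embed J 0 = 0"
  and slice_embed_1: "slice_embed J 1 = 1"
  by (auto intro: quat_eqI)

lemma slice_embed_mult_of_nat: "slice_embed J (of_nat n * z) = of_nat n * slice_embed J z"
  by (rule quat_eqI) simp_all

lemma slice_embed_add: "slice_embed J (z + w) = slice_embed J z + slice_embed J w"
  by (rule quat_eqI) (simp_all add: algebra_simps)

lemma slice_embed_mult:
  assumes "unit_imaginary J"
  shows "slice_embed J (z * w) = slice_embed J z * slice_embed J w"
proof -
  have "qRe J = 0" and "(qI J)\<^sup>2 + (qJ J)\<^sup>2 + (qK J)\<^sup>2 = 1"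
    using assms by (auto simp: unit_imaginary_def)
  then show ?thesis by (intro quat_eqI) (simp_all add: algebra_simps, algebra)
qed

lemma slice_embed_power: "unit_imaginary J \<Longrightarrow> slice_embed J (z ^ n) = slice_embed J z ^ n"
  by (induct n) (simp_all add: slice_embed_1 slice_embed_mult)

lemma slice_embed_sum: "slice_embed J (sum f S) = (\<Sum>x\<in>S. slice_embed J (f x))"
  by (induct S rule: infinite_finite_induct) (simp_all add: slice_embed_add)

lemma qnorm_slice_embed:
  assumes "unit_imaginary J"
  shows "qnorm (slice_embed J z) = cmod z"
proof -
  have "(qI J)\<^sup>2 + (qJ J)\<^sup>2 + (qK J)\<^sup>2 = 1" using assms by (simp add: unit_imaginary_def)
  then have "(Re z)\<^sup>2 + (Im z * qI J)\<^sup>2 + (Im z * qJ J)\<^sup>2 + (Im z * qK J)\<^sup>2 = (Re z)\<^sup>2 + (Im z)\<^sup>2"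
    by algebra
  then show ?thesis by (simp add: qnorm_def cmod_def)
qed

lemma slice_embed_eq_0_iff [simp]: "unit_imaginary J \<Longrightarrow> slice_embed J z = 0 \<longleftrightarrow> z = 0"
  by (metis qnorm_slice_embed slice_embed_0 norm_eq_zero)

lemma slice_embed_in_slice:
  assumes "unit_imaginary J"
  shows "slice_embed J z \<in> slice J"
proof -
  have "slice_embed J z = qreal (Re z) + qreal (Im z) * J"
    using assms by (intro quat_eqI) (simp_all add: unit_imaginary_def)
  then show ?thesis by (auto simp: slice_def)
qed

lemma commute_imp_slice_embed:
  assumes "unit_imaginary I" and "w * I = I * w"
  shows "w = slice_embed I (Complex (qRe w) (qI I * qI w + qJ I * qJ w + qK I * qK w))"
proof -
  have "(qI I)\<^sup>2 + (qJ I)\<^sup>2 + (qK I)\<^sup>2 = 1" and "qRe I = 0"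
    using assms(1) by (auto simp: unit_imaginary_def)
  moreover have "qJ w * qK I - qK w * qJ I = 0" "qK w * qI I - qI w * qK I = 0"
    "qI w * qJ I - qJ w * qI I = 0"
    using arg_cong[OF assms(2), of qI] arg_cong[OF assms(2), of qJ] arg_cong[OF assms(2), of qK]
    by (simp_all add: algebra_simps)
  ultimately show ?thesis by (intro quat_eqI) (simp_all, algebra+)
qed

text \<open>\<open>P(t)\<close> commutes with \<open>I\<close> for real \<open>t\<close>; the commutators of the coefficients are then the
  coefficients of a vanishing real polynomial.\<close>

lemma spoly_coeffs_commute:
  assumes "spoly n a ` slice I \<subseteq> slice I" and "j \<le> n"
  shows "a j * I = I * a j"
proof -
  define d where "d i = a i * I - I * a i" for i
  have "spoly n a (qreal t) * I - I * spoly n a (qreal t) = (\<Sum>i\<le>n. qreal (t ^ i) * d i)" for t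
    by (simp add: spoly_def d_def atLeast0AtMost sum_distrib_left sum_distrib_right
        qreal_power qreal_commute right_diff_distrib mult.assoc flip: sum_subtractf)
  moreover have "spoly n a (qreal t) \<in> slice I" for t using assms(1) qreal_in_slice by blast
  ultimately have zero: "(\<Sum>i\<le>n. qreal (t ^ i) * d i) = 0" for t by (simp add: slice_commute)
  have "\<forall>t. (\<Sum>i\<le>n. qRe (d i) * t ^ i) = 0" "\<forall>t. (\<Sum>i\<le>n. qI (d i) * t ^ i) = 0"
    "\<forall>t. (\<Sum>i\<le>n. qJ (d i) * t ^ i) = 0" "\<forall>t. (\<Sum>i\<le>n. qK (d i) * t ^ i) = 0"
    using arg_cong[OF zero, of qRe] arg_cong[OF zero, of qI] arg_cong[OF zero, of qJ]
      arg_cong[OF zero, of qK]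
    by (simp_all add: quat_components_sum mult.commute)
  then have "d j = 0" using assms(2) unfolding polyfun_eq_0 by (intro quat_eqI) simp_all
  then show ?thesis by (simp add: d_def)
qed

lemma spoly_slice_preserving_obtain_poly:
  assumes "unit_imaginary I" and "spoly n a ` slice I \<subseteq> slice I"
  obtains p where "degree p \<le> n" and "\<And>j. j \<le> n \<Longrightarrow> a j = slice_embed I (coeff p j)"
proof
  define c where "c j = Complex (qRe (a j)) (qI I * qI (a j) + qJ I * qJ (a j) + qK I * qK (a j))" for j
  define p where "p = Abs_poly (\<lambda>j. if j \<le> n then c j else 0)"
  have coeff_p: "coeff p j = (if j \<le> n then c j else 0)" for j
    by (simp add: p_def coeff_Abs_poly_If_le)
  show "degree p \<le> n" by (rule degree_le) (simp add: coeff_p)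
  show "a j = slice_embed I (coeff p j)" if "j \<le> n" for j
    using commute_imp_slice_embed[OF assms(1) spoly_coeffs_commute[OF assms(2) that]] that
    by (simp add: coeff_p c_def)
qed

section \<open>Slice extensions of complex polynomials\<close>

definition slice_extension :: "quat \<Rightarrow> complex poly \<Rightarrow> quat \<Rightarrow> quat" where
  "slice_extension I f q = (\<Sum>j\<le>degree f. q ^ j * slice_embed I (coeff f j))"

lemma slice_extension_eq_sum:
  assumes "\<And>j. j \<ge> N \<Longrightarrow> coeff f j = 0"
  shows "slice_extension I f q = (\<Sum>j<N. q ^ j * slice_embed I (coeff f j))"
proof -
  define K where "K = max N (Suc (degree f))"
  have "slice_extension I f q = (\<Sum>j<K. q ^ j * slice_embed I (coeff f j))"
    unfolding slice_extension_def
    by (rule sum.mono_neutral_left) (auto simp: K_def coeff_eq_0)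
  also have "\<dots> = (\<Sum>j<N. q ^ j * slice_embed I (coeff f j))"
    by (rule sum.mono_neutral_right) (auto simp: K_def assms)
  finally show ?thesis .
qed

lemma slice_extension_slice_embed:
  assumes "unit_imaginary I"
  shows "slice_extension I f (slice_embed I z) = slice_embed I (poly f z)"
proof -
  have "slice_extension I f (slice_embed I z) = (\<Sum>j\<le>degree f. slice_embed I (coeff f j * z ^ j))"
    unfolding slice_extension_def
    by (simp add: mult.commute flip: slice_embed_power[OF assms] slice_embed_mult[OF assms])
  then show ?thesis by (simp add: poly_altdef slice_embed_sum)
qed

lemma slice_embed_mult_other_slice:
  assumes "unit_imaginary J"
  shows "slice_embed J u * slice_embed I v
           = slice_embed I (of_real (Re u) * v) + J * slice_embed I (of_real (Im u) * v)"
  using assms by (intro quat_eqI) (simp_all add: unit_imaginary_def algebra_simps)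

lemma qnorm_slice_combination_le:
  assumes I: "unit_imaginary I" and J: "unit_imaginary J"
  shows "qnorm (slice_embed I A + J * slice_embed I B) \<le> max (cmod (A + \<i> * B)) (cmod (A - \<i> * B))"
proof -
  define s where "s = qI I * qI J + qJ I * qJ J + qK I * qK J"
  define X where "X = (cmod (A + \<i> * B))\<^sup>2"
  define Y where "Y = (cmod (A - \<i> * B))\<^sup>2"
  have nI: "(qI I)\<^sup>2 + (qJ I)\<^sup>2 + (qK I)\<^sup>2 = 1" and rI: "qRe I = 0"
    and nJ: "(qI J)\<^sup>2 + (qJ J)\<^sup>2 + (qK J)\<^sup>2 = 1" and rJ: "qRe J = 0"
    using I J by (auto simp: unit_imaginary_def)
  have X: "X = (Re A - Im B)\<^sup>2 + (Im A + Re B)\<^sup>2" by (simp add: X_def cmod_def)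
  have Y: "Y = (Re A + Im B)\<^sup>2 + (Im A - Re B)\<^sup>2" by (simp add: Y_def cmod_def)
  \<comment> \<open>with \<open>s = \<langle>I, J\<rangle>\<close>, the squared norm is a convex combination of \<open>X\<close> and \<open>Y\<close>\<close>
  have "(qnorm (slice_embed I A + J * slice_embed I B))\<^sup>2 = (1 + s) / 2 * X + (1 - s) / 2 * Y"
    unfolding X Y s_def qnorm_def using nI nJ rI rJ by (simp add: algebra_simps) algebra
  moreover have "s \<le> 1" and "- 1 \<le> s"
  proof -
    have "0 \<le> (qI I - qI J)\<^sup>2 + (qJ I - qJ J)\<^sup>2 + (qK I - qK J)\<^sup>2"
      and "0 \<le> (qI I + qI J)\<^sup>2 + (qJ I + qJ J)\<^sup>2 + (qK I + qK J)\<^sup>2" by simp_all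
    then show "s \<le> 1" and "- 1 \<le> s"
      using nI nJ unfolding s_def by (simp_all add: power2_eq_square algebra_simps)
  qed
  moreover have "(1 + s) / 2 * X \<le> (1 + s) / 2 * max X Y" and "(1 - s) / 2 * Y \<le> (1 - s) / 2 * max X Y"
    using \<open>s \<le> 1\<close> \<open>- 1 \<le> s\<close> by (intro mult_left_mono; simp)+
  ultimately have "(qnorm (slice_embed I A + J * slice_embed I B))\<^sup>2 \<le> max X Y"
    by (simp add: field_simps)
  also have "max X Y = (max (cmod (A + \<i> * B)) (cmod (A - \<i> * B)))\<^sup>2"
    by (simp add: X_def Y_def max_def power_mono)
  finally show ?thesis by (rule power2_le_imp_le) (simp add: le_max_iff_disj)
qed

lemma qnorm_slice_extension_le:
  assumes I: "unit_imaginary I" and J: "unit_imaginary J"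
  shows "qnorm (slice_extension I f (slice_embed J z)) \<le> max (cmod (poly f z)) (cmod (poly f (cnj z)))"
proof -
  define A where "A = (\<Sum>j\<le>degree f. of_real (Re (z ^ j)) * coeff f j)"
  define B where "B = (\<Sum>j\<le>degree f. of_real (Im (z ^ j)) * coeff f j)"
  have "slice_extension I f (slice_embed J z) = slice_embed I A + J * slice_embed I B"
    unfolding slice_extension_def A_def B_def
    by (simp add: slice_embed_mult_other_slice[OF J] slice_embed_sum sum.distrib sum_distrib_left
        flip: slice_embed_power[OF J])
  moreover have "A + \<i> * B = poly f z" and "A - \<i> * B = poly f (cnj z)"
    by (simp_all add: A_def B_def poly_altdef sum_distrib_left complex_eq_iff algebra_simps
        flip: sum.distrib sum_subtractf complex_cnj_power)
  ultimately show ?thesis using qnorm_slice_combination_le[OF I J, of A B] by simp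
qed

lemma quat_in_some_slice:
  obtains J z where "unit_imaginary J" and "q = slice_embed J z" and "cmod z = qnorm q"
proof -
  define r where "r = sqrt ((qI q)\<^sup>2 + (qJ q)\<^sup>2 + (qK q)\<^sup>2)"
  have r2: "r\<^sup>2 = (qI q)\<^sup>2 + (qJ q)\<^sup>2 + (qK q)\<^sup>2" by (simp add: r_def)
  have "cmod (Complex (qRe q) r) = qnorm q" by (simp add: cmod_def qnorm_def r2 add.assoc)
  show ?thesis
  proof (cases "r = 0")
    case True
    then have "(qI q)\<^sup>2 + (qJ q)\<^sup>2 + (qK q)\<^sup>2 = 0" using r2 by simp
    then have "(qI q)\<^sup>2 = 0" "(qJ q)\<^sup>2 = 0" "(qK q)\<^sup>2 = 0"
      using zero_le_power2[of "qI q"] zero_le_power2[of "qJ q"] zero_le_power2[of "qK q"] by linarith+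
    then have "qI q = 0" "qJ q = 0" "qK q = 0" by simp_all
    then show ?thesis using that[of "Quat 0 1 0 0" "Complex (qRe q) r"] \<open>cmod _ = qnorm q\<close> True
      by (simp add: unit_imaginary_def quat_eqI)
  next
    case False
    have "(qI q / r)\<^sup>2 + (qJ q / r)\<^sup>2 + (qK q / r)\<^sup>2 = 1"
      using False by (simp add: power_divide add_divide_distrib[symmetric] flip: r2)
    then show ?thesis using that[of "Quat 0 (qI q / r) (qJ q / r) (qK q / r)" "Complex (qRe q) r"]
        \<open>cmod _ = qnorm q\<close> False
      by (simp add: unit_imaginary_def quat_eqI)
  qed
qed

lemma supnorm_le:
  assumes "\<And>q. qnorm q \<le> 1 \<Longrightarrow> qnorm (F q) \<le> C"
  shows "supnorm F \<le> C"
proof -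
  have "qnorm 0 \<le> 1" by (simp add: qnorm_def)
  then show ?thesis unfolding supnorm_def by (intro cSUP_least) (auto intro: assms)
qed

lemma qnorm_le_supnorm:
  assumes "bdd_above ((\<lambda>q. qnorm (F q)) ` {q. qnorm q \<le> 1})" and "qnorm q \<le> 1"
  shows "qnorm (F q) \<le> supnorm F"
  unfolding supnorm_def using assms by (intro cSUP_upper) simp_all

lemma bdd_above_slice_extension:
  assumes "unit_imaginary I"
  shows "bdd_above ((\<lambda>q. qnorm (slice_extension I f q)) ` {q. qnorm q \<le> 1})"
proof -
  obtain m where m: "\<And>z. cmod z \<le> 1 \<Longrightarrow> cmod (poly f z) \<le> m"
    using poly_bound_exists[of 1 f] by blast
  have "qnorm (slice_extension I f q) \<le> m" if "qnorm q \<le> 1" for q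
  proof -
    obtain J z where "unit_imaginary J" "q = slice_embed J z" "cmod z = qnorm q"
      by (rule quat_in_some_slice)
    then show ?thesis
      using qnorm_slice_extension_le[OF assms, of J f z] m[of z] m[of "cnj z"] that by simp
  qed
  then show ?thesis by (intro bdd_aboveI2) auto
qed

lemma spoly_eq_slice_extension:
  assumes "degree p \<le> n" and "\<And>j. j \<le> n \<Longrightarrow> a j = slice_embed I (coeff p j)"
  shows "spoly n a = slice_extension I p"
proof
  fix q
  have "slice_extension I p q = (\<Sum>j<Suc n. q ^ j * slice_embed I (coeff p j))"
    using assms(1) by (intro slice_extension_eq_sum) (simp add: coeff_eq_0)
  then show "spoly n a q = slice_extension I p q"
    by (simp add: spoly_def assms(2) atLeast0AtMost lessThan_Suc_atMost)
qed

lemma spoly_deriv_eq_slice_extension: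
  assumes "degree p \<le> n" and "\<And>j. j \<le> n \<Longrightarrow> a j = slice_embed I (coeff p j)"
  shows "spoly_deriv n a = slice_extension I (pderiv p)"
proof
  fix q
  have "slice_extension I (pderiv p) q = (\<Sum>j<n. q ^ j * slice_embed I (coeff (pderiv p) j))"
    using assms(1) by (intro slice_extension_eq_sum) (simp add: coeff_pderiv coeff_eq_0)
  also have "\<dots> = (\<Sum>j<n. q ^ j * (of_nat (Suc j) * a (Suc j)))"
    by (intro sum.cong refl)
      (simp add: coeff_pderiv assms(2) slice_embed_mult_of_nat del: of_nat_Suc)
  finally show "spoly_deriv n a q = slice_extension I (pderiv p) q"
    by (simp add: spoly_deriv_def sum.atLeast1_atMost_eq)
qed

lemma zero_free_in_disc_slice_extension:
  assumes I: "unit_imaginary I" and "\<forall>w\<in>slice I. qnorm w < 1 \<longrightarrow> slice_extension I p w \<noteq> 0"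
  shows "zero_free_in_disc p (supnorm (slice_extension I p))"
proof
  fix z
  assume "cmod z < 1"
  then have "slice_extension I p (slice_embed I z) \<noteq> 0"
    using assms(2) slice_embed_in_slice[OF I, of z] by (simp add: qnorm_slice_embed[OF I])
  then show "poly p z \<noteq> 0" by (simp add: slice_extension_slice_embed[OF I] I)
next
  fix z
  assume "cmod z \<le> 1"
  then show "cmod (poly p z) \<le> supnorm (slice_extension I p)"
    using qnorm_le_supnorm[OF bdd_above_slice_extension[OF I], of "slice_embed I z" p]
    by (simp add: slice_extension_slice_embed[OF I] qnorm_slice_embed[OF I])
qed

lemma supnorm_slice_extension_le:
  assumes I: "unit_imaginary I" and "\<And>z. cmod z \<le> 1 \<Longrightarrow> cmod (poly f z) \<le> C"
  shows "supnorm (slice_extension I f) \<le> C"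
proof (rule supnorm_le)
  fix q
  assume "qnorm q \<le> 1"
  obtain J z where J: "unit_imaginary J" and "q = slice_embed J z" and "cmod z = qnorm q"
    by (rule quat_in_some_slice)
  then show "qnorm (slice_extension I f q) \<le> C"
    using qnorm_slice_extension_le[OF I J, of f z] assms(2)[of z] assms(2)[of "cnj z"] \<open>qnorm q \<le> 1\<close>
    by simp
qed

theorem proposition2p2:
  fixes n :: nat and a :: "nat \<Rightarrow> quat" and I :: quat
  assumes "a n \<noteq> 0"
    and "I \<in> imag_units"
    and "\<forall>z\<in>slice I. qnorm z < 1 \<longrightarrow> spoly n a z \<noteq> 0"
    and "spoly n a ` slice I \<subseteq> slice I"
  shows "supnorm (spoly_deriv n a) \<le> real n / 2 * supnorm (spoly n a)"
proof -
  have I: "unit_imaginary I" using assms(2) by (rule imag_units_unit_imaginary)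
  obtain p where "degree p \<le> n" and coeffs: "\<And>j. j \<le> n \<Longrightarrow> a j = slice_embed I (coeff p j)"
    using spoly_slice_preserving_obtain_poly[OF I assms(4)] by blast
  then have P: "spoly n a = slice_extension I p"
    and P': "spoly_deriv n a = slice_extension I (pderiv p)"
    by (simp_all add: spoly_eq_slice_extension spoly_deriv_eq_slice_extension)
  have "degree p = n" using \<open>degree p \<le> n\<close> assms(1) coeffs[of n] by (simp add: I le_antisym le_degree)
  interpret zero_free_in_disc p "supnorm (spoly n a)"
    using zero_free_in_disc_slice_extension[OF I] assms(3) by (simp add: P)
  show ?thesis
    unfolding P' using norm_pderiv_le_half_degree \<open>degree p = n\<close>
    by (intro supnorm_slice_extension_le[OF I]) simp
qed

end
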